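(* Let $\Omega$ be a discrete filtered set with upper closure $\tilde\Omega$. Then the closure $\overline{\mathcal{S}_\Omega}$ of $\mathcal{S}_\Omega$ in $\mathbb{R}\times\mathbb{C}$ equals $\mathcal{S}_{\tilde\Omega}$, and $\mathcal{M}_\Omega=\mathcal{M}_{\tilde\Omega}$.
   Context: A discrete filtered set (d.f.s.) is a family $\Omega=(\Omega_L)_{L\in\mathbb{R}_{\ge0}}$ of finite subsets of $\mathbb{C}$ with $\Omega_{L_1}\subseteq\Omega_{L_2}$ for $L_1\le L_2$ and $\Omega_\delta=\emptyset$ for some $\delta>0$. Its upper closure is $\tilde\Omega_L=\bigcap_{\varepsilon>0}\Omega_{L+\varepsilon}$ ($L\ge0$), which is again a d.f.s. For a d.f.s. $\Omega$ set $\mathcal{S}_\Omega=\{(\lambda,\omega)\in\mathbb{R}\times\mathbb{C}\mid \lambda\ge0,\ \omega\in\Omega_\lambda\}$ and $\mathcal{M}_\Omega=(\mathbb{R}\times\mathbb{C})\setminus\overline{\mathcal{S}_\Omega}$, where the bar denotes closure in $\mathbb{R}\times\mathbb{C}$. *)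

theory Defs
  imports "HOL-Analysis.Analysis"
begin

text \<open>Values at negative
  indices are irrelevant (the family is only indexed by nonnegative reals).\<close>
definition dfs :: "(real \<Rightarrow> complex set) \<Rightarrow> bool" where
  "dfs \<Omega> \<longleftrightarrow>
     (\<forall>L\<ge>0. finite (\<Omega> L)) \<and>
     (\<forall>L1 L2. 0 \<le> L1 \<longrightarrow> L1 \<le> L2 \<longrightarrow> \<Omega> L1 \<subseteq> \<Omega> L2) \<and>
     (\<exists>\<delta>>0. \<Omega> \<delta> = {})"

definition upper_closure :: "(real \<Rightarrow> complex set) \<Rightarrow> (real \<Rightarrow> complex set)" where
  "upper_closure \<Omega> = (\<lambda>L. \<Inter>\<epsilon>\<in>{0<..}. \<Omega> (L + \<epsilon>))"

definition S_set :: "(real \<Rightarrow> complex set) \<Rightarrow> (real \<times> complex) set" where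
  "S_set \<Omega> = {(l, w). l \<ge> 0 \<and> w \<in> \<Omega> l}"

definition M_set :: "(real \<Rightarrow> complex set) \<Rightarrow> (real \<times> complex) set" where
  "M_set \<Omega> = UNIV - closure (S_set \<Omega>)"

end

theory Submission
  imports Defs
begin

text \<open>A point \<open>(l, w)\<close> with \<open>w \<in> \<Omega> (l + \<epsilon>)\<close> for all \<open>\<epsilon> > 0\<close> is the limit of the points
  \<open>(l + 1/(n+1), w) \<in> S_\<Omega>\<close>. Conversely, if \<open>w \<notin> \<Omega> (l + \<epsilon>)\<close>, then by monotonicity the open box
  \<open>{..<l + \<epsilon>} \<times> (- \<Omega> (l + \<epsilon>))\<close> around \<open>(l, w)\<close> misses \<open>S_\<Omega>\<close>; the box is open because the finite
  level \<open>\<Omega> (l + \<epsilon>)\<close> is closed. So the closure of \<open>S_\<Omega>\<close> is the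
  \<open>S\<close>-set of the upper closure, which is therefore closed; as \<open>M\<close> only depends on the closure
  of \<open>S\<close>, the two \<open>M\<close>-sets coincide.\<close>

lemma not_in_closure_if_open_disjoint:
  assumes "open U" "U \<inter> S = {}" "x \<in> U"
  shows "x \<notin> closure S"
  using assms open_Int_closure_eq_empty by blast

lemma closure_S_set_subset_upper_closure:
  assumes closed: "\<And>L. 0 \<le> L \<Longrightarrow> closed (\<Omega> L)"
    and mono: "\<And>L1 L2. 0 \<le> L1 \<Longrightarrow> L1 \<le> L2 \<Longrightarrow> \<Omega> L1 \<subseteq> \<Omega> L2"
  shows "closure (S_set \<Omega>) \<subseteq> S_set (upper_closure \<Omega>)"
proof safe
  fix l w assume lw: "(l, w) \<in> closure (S_set \<Omega>)"
  have l_nonneg: "0 \<le> l"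
  proof (rule ccontr)
    let ?U = "{..<0} \<times> UNIV :: (real \<times> complex) set"
    assume "\<not> 0 \<le> l"
    then have "(l, w) \<in> ?U"
      by simp
    moreover have "open ?U"
      by (intro open_Times) auto
    moreover have "?U \<inter> S_set \<Omega> = {}"
      by (auto simp: S_set_def)
    ultimately show False
      using lw not_in_closure_if_open_disjoint by metis
  qed
  have "w \<in> \<Omega> (l + \<epsilon>)" if "\<epsilon> > 0" for \<epsilon>
  proof (rule ccontr)
    let ?U = "{..<l + \<epsilon>} \<times> - \<Omega> (l + \<epsilon>)"
    assume "w \<notin> \<Omega> (l + \<epsilon>)"
    then have "(l, w) \<in> ?U"
      using \<open>\<epsilon> > 0\<close> by simp
    moreover have "open ?U"
      using closed[of "l + \<epsilon>"] l_nonneg \<open>\<epsilon> > 0\<close> by (intro open_Times) auto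
    moreover have "?U \<inter> S_set \<Omega> = {}"
      using mono[of _ "l + \<epsilon>"] by (fastforce simp: S_set_def)
    ultimately show False
      using lw not_in_closure_if_open_disjoint by metis
  qed
  with l_nonneg show "(l, w) \<in> S_set (upper_closure \<Omega>)"
    by (simp add: S_set_def upper_closure_def)
qed

lemma S_set_upper_closure_subset_closure:
  "S_set (upper_closure \<Omega>) \<subseteq> closure (S_set \<Omega>)"
proof safe
  fix l w assume "(l, w) \<in> S_set (upper_closure \<Omega>)"
  then have l_nonneg: "0 \<le> l" and w: "\<And>\<epsilon>. \<epsilon> > 0 \<Longrightarrow> w \<in> \<Omega> (l + \<epsilon>)"
    by (auto simp: S_set_def upper_closure_def)
  define p where "p n = (l + inverse (real (Suc n)), w)" for n
  have "p n \<in> S_set \<Omega>" for n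
    using l_nonneg w by (simp add: p_def S_set_def)
  moreover have "p \<longlonglongrightarrow> (l, w)"
    unfolding p_def
    using tendsto_add[OF tendsto_const LIMSEQ_inverse_real_of_nat, of l]
    by (auto intro: tendsto_Pair)
  ultimately show "(l, w) \<in> closure (S_set \<Omega>)"
    by (meson closure_sequential)
qed

theorem lemma2p4:
  assumes "dfs \<Omega>"
  shows "closure (S_set \<Omega>) = S_set (upper_closure \<Omega>) \<and>
         M_set \<Omega> = M_set (upper_closure \<Omega>)"
proof -
  have "closure (S_set \<Omega>) = S_set (upper_closure \<Omega>)"
  proof (rule antisym[OF closure_S_set_subset_upper_closure S_set_upper_closure_subset_closure])
    show "closed (\<Omega> L)" if "0 \<le> L" for L
      using assms that by (simp add: dfs_def finite_imp_closed)
    show "\<Omega> L1 \<subseteq> \<Omega> L2" if "0 \<le> L1" "L1 \<le> L2" for L1 L2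
      using assms that by (simp add: dfs_def)
  qed
  then show ?thesis
    unfolding M_set_def by (metis closure_closure)
qed

end
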